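(* Let $\mathbb{F}=\mathbb{F}_q$ with $q<n$, $\Delta>1$, $D\le\frac{n(q-1)-q}{2}$, and additionally $D=o(n)$. Then for sufficiently large $n$ there exist matrices $M$ over $\mathbb{F}_q$ that can $\Delta$-approximate $d=\|\mathbf{x}\|_0$ from $M\mathbf{x}$ for every $\mathbf{x}\in\mathbb{F}_q^n$ of weight at most $D$, with $(2D+1)\log_q\!\left(\frac{n}{2D+1}\right)+O(D)=O(D\log(n/D))$ rows.
   Context: $M\mathbf{x}$ is the ordinary matrix-vector product over $\mathbb{F}_q$; $\|\mathbf{x}\|_0$ is the number of nonzero entries. $M$ can $\Delta$-approximate $d$ if a deterministic decoder given only $M\mathbf{x}$ outputs $\hat d$ with $\frac1\Delta\le\hat d/d\le\Delta$ for all $\mathbf{x}$ with $\|\mathbf{x}\|_0\le D$. *)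

theory Defs
  imports "HOL-Analysis.Analysis" "HOL-Library.Landau_Symbols"
begin

text \<open>An m x n matrix over a field is represented as M :: nat => nat => 'a (entries
  M i j with i < m, j < n are relevant); vectors in F^n as nat => 'a supported on {..<n}.\<close>

definition mat_vec :: "nat \<Rightarrow> nat \<Rightarrow> (nat \<Rightarrow> nat \<Rightarrow> 'a::field) \<Rightarrow> (nat \<Rightarrow> 'a) \<Rightarrow> (nat \<Rightarrow> 'a)" where
  "mat_vec m n M x = (\<lambda>i. if i < m then (\<Sum>j<n. M i j * x j) else 0)"

definition weight0 :: "nat \<Rightarrow> (nat \<Rightarrow> 'a::zero) \<Rightarrow> nat" where
  "weight0 n x = card {j \<in> {..<n}. x j \<noteq> 0}"

text \<open>M (m rows, n columns) can Delta-approximate the Hamming weight d of every x in F^n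
  with weight at most D: a deterministic decoder given only Mx outputs dhat with
  d/Delta <= dhat <= Delta*d (equivalent to 1/Delta <= dhat/d <= Delta for d > 0,
  and forcing dhat = 0 when d = 0).\<close>

definition can_approx :: "real \<Rightarrow> nat \<Rightarrow> nat \<Rightarrow> nat \<Rightarrow> (nat \<Rightarrow> nat \<Rightarrow> 'a::field) \<Rightarrow> bool" where
  "can_approx \<Delta> D m n M \<longleftrightarrow>
     (\<exists>dec :: (nat \<Rightarrow> 'a) \<Rightarrow> real.
        \<forall>x :: nat \<Rightarrow> 'a. (\<forall>j\<ge>n. x j = 0) \<longrightarrow> weight0 n x \<le> D \<longrightarrow>
          real (weight0 n x) / \<Delta> \<le> dec (mat_vec m n M x) \<and>
          dec (mat_vec m n M x) \<le> \<Delta> * real (weight0 n x))"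

end

theory Submission
  imports Defs
begin

text \<open>If no nonzero vector of weight at most 2D lies in the kernel of M, then M is injective on
  vectors of weight at most D, so the weight can be decoded exactly. Such an M with m rows exists
  by counting: for a fixed nonzero v, only a q^(-m) fraction of all m x n matrices annihilates v,
  and there are fewer than (e q n / 2D)^(2D) nonzero vectors of weight at most 2D, so once
  q^m exceeds this number some matrix annihilates none of them. Taking logarithms gives
  m = 2D log_q(n / 2D) + O(D).\<close>

definition sparse_vectors :: "nat \<Rightarrow> nat \<Rightarrow> (nat \<Rightarrow> 'a::zero) set" where
  "sparse_vectors n k = {v. (\<forall>j\<ge>n. v j = 0) \<and> weight0 n v \<le> k}"

lemma finite_sparse_vectors: "finite (sparse_vectors n k :: (nat \<Rightarrow> 'a::{finite,zero}) set)"
proof (rule finite_subset)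
  show "sparse_vectors n k \<subseteq> {f. \<forall>x. (x \<in> {..<n} \<longrightarrow> f x \<in> UNIV) \<and> (x \<notin> {..<n} \<longrightarrow> f x = 0)}"
    by (auto simp: sparse_vectors_def)
qed (rule finite_set_of_finite_funs; simp)

lemma weight0_diff_le:
  "weight0 n (\<lambda>j. x j - y j) \<le> weight0 n x + weight0 n (y :: nat \<Rightarrow> 'a::ab_group_add)"
proof -
  have "{j \<in> {..<n}. x j - y j \<noteq> 0} \<subseteq> {j \<in> {..<n}. x j \<noteq> 0} \<union> {j \<in> {..<n}. y j \<noteq> 0}"
    by auto
  then have "weight0 n (\<lambda>j. x j - y j) \<le> card ({j \<in> {..<n}. x j \<noteq> 0} \<union> {j \<in> {..<n}. y j \<noteq> 0})"
    unfolding weight0_def by (intro card_mono) auto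
  also have "\<dots> \<le> weight0 n x + weight0 n y"
    unfolding weight0_def by (rule card_Un_le)
  finally show ?thesis .
qed

lemma mat_vec_diff:
  "mat_vec m n M (\<lambda>j. x j - y j) = (\<lambda>i. mat_vec m n M x i - mat_vec m n M y i)"
  by (auto simp: mat_vec_def fun_eq_iff right_diff_distrib sum_subtractf)

lemma inj_on_sparse_vectors_if_kernel_sparse_trivial:
  assumes "\<forall>v \<in> sparse_vectors n (2 * k). mat_vec m n M v = (\<lambda>_. 0) \<longrightarrow> v = (\<lambda>_. 0)"
  shows "inj_on (mat_vec m n M) (sparse_vectors n k)"
proof (rule inj_onI)
  fix x y assume x: "x \<in> sparse_vectors n k" and y: "y \<in> sparse_vectors n k"
    and eq: "mat_vec m n M x = mat_vec m n M y"
  have "(\<lambda>j. x j - y j) \<in> sparse_vectors n (2 * k)"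
    using x y weight0_diff_le[of n x y] by (auto simp: sparse_vectors_def)
  moreover have "mat_vec m n M (\<lambda>j. x j - y j) = (\<lambda>_. 0)"
    by (simp add: mat_vec_diff eq)
  ultimately show "x = y"
    using assms by (auto simp: fun_eq_iff)
qed

lemma can_approx_if_inj_on_sparse_vectors:
  assumes "1 \<le> \<Delta>" and inj: "inj_on (mat_vec m n M) (sparse_vectors n D)"
  shows "can_approx \<Delta> D m n M"
  unfolding can_approx_def
proof (intro exI allI impI)
  define dec where "dec y = real (weight0 n (inv_into (sparse_vectors n D) (mat_vec m n M) y))" for y
  fix x :: "nat \<Rightarrow> 'a" assume "\<forall>j\<ge>n. x j = 0" "weight0 n x \<le> D"
  then have "x \<in> sparse_vectors n D" by (simp add: sparse_vectors_def)
  then have exact: "dec (mat_vec m n M x) = real (weight0 n x)"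
    by (simp add: dec_def inv_into_f_f[OF inj])
  have "real (weight0 n x) \<le> \<Delta> * real (weight0 n x)"
    using mult_right_mono[OF assms(1), of "real (weight0 n x)"] by simp
  moreover from this have "real (weight0 n x) / \<Delta> \<le> real (weight0 n x)"
    using assms(1) by (simp add: divide_le_eq mult.commute)
  ultimately
  show "real (weight0 n x) / \<Delta> \<le> dec (mat_vec m n M x) \<and> dec (mat_vec m n M x) \<le> \<Delta> * real (weight0 n x)"
    by (simp add: exact)
qed

lemma card_functions_zero_outside:
  assumes "finite A"
  shows "card {f :: 'b \<Rightarrow> 'a::{finite,zero}. \<forall>x. x \<notin> A \<longrightarrow> f x = 0} = CARD('a) ^ card A"
proof -
  have "bij_betw (\<lambda>f. restrict f A) {f. \<forall>x. x \<notin> A \<longrightarrow> f x = 0} (A \<rightarrow>\<^sub>E (UNIV :: 'a set))"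
    by (rule bij_betw_byWitness[where f' = "\<lambda>g x. if x \<in> A then g x else 0"])
      (auto simp: fun_eq_iff PiE_def extensional_def)
  then show ?thesis
    using assms by (simp add: bij_betw_same_card card_funcsetE)
qed

lemma card_matrices_zero_outside:
  assumes "finite A"
  shows "card {M :: nat \<Rightarrow> nat \<Rightarrow> 'a::{finite,zero}. \<forall>i j. (i, j) \<notin> A \<longrightarrow> M i j = 0} = CARD('a) ^ card A"
proof -
  have "bij_betw curry {f :: nat \<times> nat \<Rightarrow> 'a. \<forall>p. p \<notin> A \<longrightarrow> f p = 0}
      {M :: nat \<Rightarrow> nat \<Rightarrow> 'a. \<forall>i j. (i, j) \<notin> A \<longrightarrow> M i j = 0}"
    by (rule bij_betw_byWitness[where f' = case_prod]) auto
  from bij_betw_same_card[OF this] show ?thesis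
    using card_functions_zero_outside[OF assms, where 'a='a] by simp
qed

lemma card_matrices_annihilating_le:
  fixes v :: "nat \<Rightarrow> 'a::{finite,field}"
  assumes j0: "j0 < n" "v j0 \<noteq> 0"
  shows "card {M. (\<forall>i j. (i, j) \<notin> {..<m} \<times> {..<n} \<longrightarrow> M i j = 0) \<and> mat_vec m n M v = (\<lambda>_. 0)}
           \<le> CARD('a) ^ (m * (n - 1))"
    (is "card ?Bad \<le> _")
proof -
  define clear_col where "clear_col M = (\<lambda>i j. if j = j0 then 0 else M i j)" for M :: "nat \<Rightarrow> nat \<Rightarrow> 'a"
  let ?Z = "{M :: nat \<Rightarrow> nat \<Rightarrow> 'a. \<forall>i j. (i, j) \<notin> {..<m} \<times> ({..<n} - {j0}) \<longrightarrow> M i j = 0}"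
  \<comment> \<open>Since v j0 is nonzero, column j0 of an annihilating matrix is determined by the others.\<close>
  have column: "M i j0 * v j0 = - (\<Sum>j \<in> {..<n} - {j0}. clear_col M i j * v j)" if "M \<in> ?Bad" for M i
  proof (cases "i < m")
    case True
    have "(\<Sum>j<n. M i j * v j) = 0"
      using that True by (auto simp: mat_vec_def fun_eq_iff dest!: spec[of _ i])
    moreover have "(\<Sum>j<n. M i j * v j) = M i j0 * v j0 + (\<Sum>j \<in> {..<n} - {j0}. clear_col M i j * v j)"
      using j0 by (simp add: sum.remove clear_col_def)
    ultimately show ?thesis
      by (simp add: eq_neg_iff_add_eq_0)
  qed (use that in \<open>auto simp: clear_col_def\<close>)
  have "inj_on clear_col ?Bad"
  proof (rule inj_onI)
    fix M M' assume M: "M \<in> ?Bad" and M': "M' \<in> ?Bad" and clear_eq: "clear_col M = clear_col M'"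
    show "M = M'"
    proof (intro ext)
      fix i j
      show "M i j = M' i j"
      proof (cases "j = j0")
        case True
        have "M i j0 * v j0 = M' i j0 * v j0"
          using column[OF M, of i] column[OF M', of i] clear_eq by simp
        with True j0(2) show ?thesis
          by simp
      next
        case False
        then show ?thesis
          using fun_cong[OF fun_cong[OF clear_eq, of i], of j] by (simp add: clear_col_def)
      qed
    qed
  qed
  moreover have "clear_col ` ?Bad \<subseteq> ?Z"
    by (auto simp: clear_col_def)
  moreover have card_Z: "card ?Z = CARD('a) ^ (m * (n - 1))"
  proof -
    have "m * (n - 1) = card ({..<m} \<times> ({..<n} - {j0}))"
      using j0 by (simp add: card_cartesian_product)
    then show ?thesis
      by (simp only:) (rule card_matrices_zero_outside, simp)
  qed
  moreover from card_Z have "finite ?Z"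
    by (intro card_ge_0_finite) simp
  ultimately show ?thesis
    using card_inj_on_le by (metis (no_types, lifting))
qed

lemma exists_matrix_nonvanishing_on:
  fixes S :: "(nat \<Rightarrow> 'a::{finite,field}) set"
  assumes "finite S" and card_S: "card S < CARD('a) ^ m"
    and support: "\<forall>v\<in>S. \<exists>j<n. v j \<noteq> 0"
  shows "\<exists>M :: nat \<Rightarrow> nat \<Rightarrow> 'a. \<forall>v\<in>S. mat_vec m n M v \<noteq> (\<lambda>_. 0)"
proof (cases "S = {}")
  case False
  then obtain v j where "v \<in> S" "j < n"
    using support by blast
  then have "n \<ge> 1"
    by simp
  let ?Mats = "{M :: nat \<Rightarrow> nat \<Rightarrow> 'a. \<forall>i j. (i, j) \<notin> {..<m} \<times> {..<n} \<longrightarrow> M i j = 0}"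
  define Bad where "Bad v =
    {M. (\<forall>i j. (i, j) \<notin> {..<m} \<times> {..<n} \<longrightarrow> M i j = 0) \<and> mat_vec m n M v = (\<lambda>_. 0)}"
    for v :: "nat \<Rightarrow> 'a"
  have card_Mats: "card ?Mats = CARD('a) ^ (m * n)"
    using card_matrices_zero_outside[of "{..<m} \<times> {..<n}", where 'a='a]
    by (simp add: card_cartesian_product)
  have card_Bad: "card (Bad v) \<le> CARD('a) ^ (m * (n - 1))" if "v \<in> S" for v
  proof -
    obtain j0 where "j0 < n" "v j0 \<noteq> 0"
      using support \<open>v \<in> S\<close> by blast
    then show ?thesis
      unfolding Bad_def by (rule card_matrices_annihilating_le)
  qed
  have "card (\<Union>v\<in>S. Bad v) \<le> (\<Sum>v\<in>S. card (Bad v))"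
    using assms(1) by (rule card_UN_le)
  also have "\<dots> \<le> card S * CARD('a) ^ (m * (n - 1))"
    using sum_bounded_above[of S "\<lambda>v. card (Bad v)", OF card_Bad] by simp
  also have "\<dots> < CARD('a) ^ m * CARD('a) ^ (m * (n - 1))"
    using card_S by (intro mult_strict_right_mono) simp_all
  also have "\<dots> = card ?Mats"
  proof -
    have "m * n = m + m * (n - 1)"
      using \<open>n \<ge> 1\<close> by (cases n) simp_all
    then show ?thesis
      unfolding card_Mats by (simp add: power_add)
  qed
  finally have "(\<Union>v\<in>S. Bad v) \<noteq> ?Mats"
    by (metis less_irrefl)
  moreover have "(\<Union>v\<in>S. Bad v) \<subseteq> ?Mats"
    unfolding Bad_def by blast
  ultimately obtain M where "M \<in> ?Mats" "M \<notin> (\<Union>v\<in>S. Bad v)"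
    by blast
  then show ?thesis
    unfolding Bad_def by blast
qed simp

lemma card_sparse_vectors_le:
  assumes "k \<le> n"
  shows "card (sparse_vectors n k :: (nat \<Rightarrow> 'a::{finite,zero}) set) \<le> (n choose k) * CARD('a) ^ k"
proof -
  define Ks where "Ks = {K. K \<subseteq> {..<n} \<and> card K = k}"
  define Supp where "Supp K = {v :: nat \<Rightarrow> 'a. \<forall>j. j \<notin> K \<longrightarrow> v j = 0}" for K
  have cover: "sparse_vectors n k \<subseteq> (\<Union>K\<in>Ks. Supp K)"
  proof
    fix v :: "nat \<Rightarrow> 'a" assume v: "v \<in> sparse_vectors n k"
    define P where "P = {j \<in> {..<n}. v j \<noteq> 0}"
    have "card P \<le> k" "P \<subseteq> {..<n}"
      using v by (auto simp: P_def sparse_vectors_def weight0_def)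
    then obtain K where "P \<subseteq> K" "K \<subseteq> {..<n}" "card K = k"
      using assms by (metis card_lessThan exists_subset_between finite_lessThan)
    moreover have "v \<in> Supp K"
      unfolding Supp_def
    proof (intro CollectI allI impI)
      fix j assume "j \<notin> K"
      with \<open>P \<subseteq> K\<close> have "j \<notin> P" by blast
      then show "v j = 0"
        using v by (cases "j < n") (auto simp: P_def sparse_vectors_def)
    qed
    ultimately show "v \<in> (\<Union>K\<in>Ks. Supp K)"
      by (auto simp: Ks_def)
  qed
  have "finite Ks"
    unfolding Ks_def by (rule finite_subset[of _ "Pow {..<n}"]) auto
  have finite_Supp: "finite (Supp K)" if "K \<in> Ks" for K
  proof -
    have "K \<subseteq> {..<n}"
      using that by (simp add: Ks_def)
    then have "finite K"
      by (rule finite_subset) simp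
    then show ?thesis
      unfolding Supp_def using finite_set_of_finite_funs[of K "UNIV :: 'a set" 0] by simp
  qed
  have "finite (\<Union>K\<in>Ks. Supp K)"
    using \<open>finite Ks\<close> finite_Supp by (rule finite_UN_I)
  then have "card (sparse_vectors n k :: (nat \<Rightarrow> 'a) set) \<le> card (\<Union>K\<in>Ks. Supp K)"
    using cover by (rule card_mono)
  also have "\<dots> \<le> (\<Sum>K\<in>Ks. card (Supp K))"
    using \<open>finite Ks\<close> by (rule card_UN_le)
  also have "\<dots> = (\<Sum>K\<in>Ks. CARD('a) ^ k)"
    by (intro sum.cong refl) (auto simp: Ks_def Supp_def card_functions_zero_outside finite_subset)
  also have "\<dots> = (n choose k) * CARD('a) ^ k"
    by (simp add: Ks_def n_subsets)
  finally show ?thesis .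
qed

lemma power_div_fact_le_exp:
  fixes x :: real
  assumes "0 \<le> x"
  shows "x ^ k / fact k \<le> exp x"
proof -
  have exp_series: "(\<lambda>n. x ^ n / fact n) sums exp x"
    using exp_converges[of x] by (simp add: divide_inverse mult.commute scaleR_conv_of_real)
  have "(\<Sum>n\<in>{k}. x ^ n / fact n) \<le> (\<Sum>n. x ^ n / fact n)"
    using assms by (intro sum_le_suminf) (auto intro: sums_summable[OF exp_series])
  then show ?thesis
    using exp_series by (simp add: sums_iff)
qed

lemma binomial_le_exp_pow: "real (n choose k) \<le> (exp 1 * real n / real k) ^ k"
proof -
  have "0 < real k ^ k"
    by (cases "k = 0") simp_all
  have "real (n choose k) * fact k \<le> real n ^ k"
    by (metis binomial_fact_pow of_nat_fact of_nat_le_iff of_nat_mult of_nat_power)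
  then have "real (n choose k) \<le> real n ^ k / fact k"
    by (simp add: le_divide_eq)
  also have "\<dots> = real n ^ k * exp (real k) / (exp (real k) * fact k)"
    by simp
  also have "\<dots> \<le> real n ^ k * exp (real k) / real k ^ k"
    using power_div_fact_le_exp[of "real k" k] \<open>0 < real k ^ k\<close>
    by (intro divide_left_mono) (auto simp: divide_le_eq)
  also have "\<dots> = (exp 1 * real n / real k) ^ k"
    by (simp add: power_divide power_mult_distrib mult.commute flip: exp_of_nat_mult)
  finally show ?thesis .
qed

lemma card_sparse_vectors_le_exp_pow:
  assumes "k \<le> n"
  shows "real (card (sparse_vectors n k :: (nat \<Rightarrow> 'a::{finite,zero}) set))
           \<le> (exp 1 * real CARD('a) * real n / real k) ^ k"
proof -
  have "real (card (sparse_vectors n k :: (nat \<Rightarrow> 'a) set)) \<le> real (n choose k) * real CARD('a) ^ k"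
    using card_sparse_vectors_le[OF assms, where 'a='a] by (simp flip: of_nat_power of_nat_mult)
  also have "\<dots> \<le> (exp 1 * real n / real k) ^ k * real CARD('a) ^ k"
    by (intro mult_right_mono binomial_le_exp_pow) simp
  also have "\<dots> = (exp 1 * real CARD('a) * real n / real k) ^ k"
    by (simp add: power_mult_distrib[symmetric] mult_ac)
  finally show ?thesis .
qed

lemma le_power_nat_ceiling_log:
  fixes q B :: real
  assumes "1 < q" "0 < B"
  shows "B \<le> q ^ nat \<lceil>log q B\<rceil>"
proof -
  have "B = q powr log q B"
    using assms by simp
  also have "\<dots> \<le> q powr real (nat \<lceil>log q B\<rceil>)"
    using assms by (intro powr_mono) (auto simp: real_nat_ceiling_ge)
  also have "\<dots> = q ^ nat \<lceil>log q B\<rceil>"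
    using assms by (simp add: powr_realpow)
  finally show ?thesis .
qed

lemma exists_approx_matrix:
  assumes "1 \<le> \<Delta>"
    and card_le: "card (sparse_vectors n (2 * d) :: (nat \<Rightarrow> 'a::{finite,field}) set) \<le> CARD('a) ^ m"
  shows "\<exists>M :: nat \<Rightarrow> nat \<Rightarrow> 'a. can_approx \<Delta> d m n M"
proof -
  let ?S = "sparse_vectors n (2 * d) - {\<lambda>_. 0} :: (nat \<Rightarrow> 'a) set"
  have "(\<lambda>_. 0) \<in> (sparse_vectors n (2 * d) :: (nat \<Rightarrow> 'a) set)"
    by (simp add: sparse_vectors_def weight0_def)
  then have "card ?S < CARD('a) ^ m"
    using card_le card_Diff1_less[OF finite_sparse_vectors] by (metis order_less_le_trans)
  moreover have "\<forall>v\<in>?S. \<exists>j<n. v j \<noteq> 0"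
    by (auto simp: sparse_vectors_def fun_eq_iff) (meson not_le)
  ultimately obtain M :: "nat \<Rightarrow> nat \<Rightarrow> 'a" where "\<forall>v\<in>?S. mat_vec m n M v \<noteq> (\<lambda>_. 0)"
    using exists_matrix_nonvanishing_on[of ?S m n] finite_sparse_vectors by blast
  then have "inj_on (mat_vec m n M) (sparse_vectors n d)"
    by (intro inj_on_sparse_vectors_if_kernel_sparse_trivial) blast
  then show ?thesis
    using assms(1) can_approx_if_inj_on_sparse_vectors by blast
qed

lemma card_field_ge_2: "2 \<le> CARD('a::{finite,field})"
proof -
  have "card {0::'a, 1} \<le> CARD('a)"
    by (rule card_mono) auto
  then show ?thesis
    by simp
qed

lemma nat_ceiling_log_power_le:
  fixes q :: real and n k :: nat
  assumes "2 \<le> q" "0 < k" "k < n"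
  shows "real (nat \<lceil>log q ((exp 1 * q * real n / real k) ^ k)\<rceil>)
           \<le> real (k + 1) * log q (real n / real (k + 1)) + (1 + log q (exp 1 * q)) * real k + 1"
proof -
  define L where "L = log q (real n / real (k + 1))"
  define a where "a = log q (exp 1 * q)"
  have "1 \<le> exp 1 * q"
    using assms mult_mono[of 1 "exp 1" 1 q] by simp
  then have "0 \<le> L" "0 \<le> a"
    unfolding L_def a_def using assms by simp_all
  have split: "real n / real k = (real n / real (k + 1)) * (real (k + 1) / real k)"
    using assms by simp
  have "log q (real n / real k) = L + log q (real (k + 1) / real k)"
    unfolding L_def using assms by (subst split, simp only: log_mult) simp
  also have "log q (real (k + 1) / real k) \<le> log q q"
  proof -
    have "real (k + 1) \<le> 2 * real k"
      using assms by simp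
    also have "\<dots> \<le> q * real k"
      using assms by (intro mult_right_mono) simp_all
    finally show ?thesis
      using assms by (subst log_le_cancel_iff) (auto simp: divide_le_eq)
  qed
  finally have "log q (real n / real k) \<le> L + 1"
    using assms by simp
  have "log q ((exp 1 * q) * (real n / real k)) = a + log q (real n / real k)"
    unfolding a_def using assms by (simp only: log_mult) simp
  then have log_base: "log q (exp 1 * q * real n / real k) = a + log q (real n / real k)"
    by (simp only: times_divide_eq_right)
  have "log q ((exp 1 * q * real n / real k) ^ k) = real k * log q (exp 1 * q * real n / real k)"
    using assms by (intro log_nat_power) simp
  also have "\<dots> = real k * (a + log q (real n / real k))"
    by (simp only: log_base)
  also have "\<dots> \<le> real k * (a + L + 1)"
    using \<open>log q (real n / real k) \<le> L + 1\<close> by (intro mult_left_mono) simp_all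
  also have "\<dots> \<le> real (k + 1) * L + (1 + a) * real k"
    using \<open>0 \<le> L\<close> by (simp add: algebra_simps)
  finally have "log q ((exp 1 * q * real n / real k) ^ k) \<le> real (k + 1) * L + (1 + a) * real k" .
  moreover have "0 \<le> real (k + 1) * L + (1 + a) * real k"
    using \<open>0 \<le> L\<close> \<open>0 \<le> a\<close> by simp
  ultimately show ?thesis
    unfolding L_def a_def by linarith
qed

lemma exists_approx_matrix_log_rows:
  fixes d n :: nat and \<Delta> :: real
  assumes "1 \<le> \<Delta>" and "2 * d < n"
  shows "\<exists>m (M :: nat \<Rightarrow> nat \<Rightarrow> 'a::{finite,field}). can_approx \<Delta> d m n M \<and>
           real m \<le> real (2 * d + 1) * log (real CARD('a)) (real n / real (2 * d + 1))
                    + (3 + 2 * log (real CARD('a)) (exp 1 * real CARD('a))) * real d"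
proof -
  define q where "q = real CARD('a)"
  define L where "L = log q (real n / real (2 * d + 1))"
  have "2 \<le> q"
    using card_field_ge_2[where 'a='a] by (simp add: q_def)
  then have "0 \<le> L"
    using assms(2) by (simp add: L_def)
  show ?thesis
  proof (cases "d = 0")
    case True
    have "card (sparse_vectors n (2 * d) :: (nat \<Rightarrow> 'a) set) \<le> CARD('a) ^ 0"
      using card_sparse_vectors_le[of 0 n, where 'a='a] True by simp
    then obtain M :: "nat \<Rightarrow> nat \<Rightarrow> 'a" where "can_approx \<Delta> d 0 n M"
      using exists_approx_matrix[OF assms(1)] by blast
    with \<open>0 \<le> L\<close> show ?thesis
      by (intro exI[of _ 0]) (auto simp: True q_def L_def)
  next
    case False
    define k where "k = 2 * d"
    define m where "m = nat \<lceil>log q ((exp 1 * q * real n / real k) ^ k)\<rceil>"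
    have "0 < k" "k < n"
      using False assms(2) by (simp_all add: k_def)
    have "real (card (sparse_vectors n k :: (nat \<Rightarrow> 'a) set)) \<le> (exp 1 * q * real n / real k) ^ k"
      unfolding q_def using \<open>k < n\<close> by (intro card_sparse_vectors_le_exp_pow) simp
    also have "\<dots> \<le> q ^ m"
      unfolding m_def using \<open>2 \<le> q\<close> \<open>0 < k\<close> \<open>k < n\<close> by (intro le_power_nat_ceiling_log) simp_all
    finally have "card (sparse_vectors n (2 * d) :: (nat \<Rightarrow> 'a) set) \<le> CARD('a) ^ m"
      by (simp add: q_def k_def flip: of_nat_power)
    then obtain M :: "nat \<Rightarrow> nat \<Rightarrow> 'a" where "can_approx \<Delta> d m n M"
      using exists_approx_matrix[OF assms(1)] by blast
    moreover have "real m \<le> real (k + 1) * L + (1 + log q (exp 1 * q)) * real k + 1"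
      unfolding m_def L_def k_def using nat_ceiling_log_power_le[OF \<open>2 \<le> q\<close> \<open>0 < k\<close> \<open>k < n\<close>]
      by (simp add: k_def)
    ultimately show ?thesis
      using False by (intro exI[of _ m] exI[of _ M]) (simp add: q_def L_def k_def algebra_simps)
  qed
qed

theorem corollary2:
  fixes D :: "nat \<Rightarrow> nat" and \<Delta> :: real
  assumes "\<Delta> > 1"
    and "\<forall>n. CARD('a::{finite,field}) < n \<longrightarrow>
           2 * real (D n) \<le> real n * (real CARD('a) - 1) - real CARD('a)"
    and "(\<lambda>n. real (D n)) \<in> o(\<lambda>n. real n)"
  shows "\<exists>C. \<forall>\<^sub>F n in sequentially. \<exists>m (M :: nat \<Rightarrow> nat \<Rightarrow> 'a).
           can_approx \<Delta> (D n) m n M \<and>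
           real m \<le> real (2 * D n + 1) * log (real CARD('a)) (real n / real (2 * D n + 1))
                     + C * real (D n)"
proof
  have "\<forall>\<^sub>F n in sequentially. real (D n) \<le> 1 / 4 * real n"
    using landau_o.smallD[OF assms(3), of "1 / 4"] by simp
  moreover have "\<forall>\<^sub>F n in sequentially. 1 \<le> n"
    by (rule eventually_ge_at_top)
  ultimately have "\<forall>\<^sub>F n in sequentially. 2 * D n < n"
    by eventually_elim linarith
  then show "\<forall>\<^sub>F n in sequentially. \<exists>m (M :: nat \<Rightarrow> nat \<Rightarrow> 'a).
           can_approx \<Delta> (D n) m n M \<and>
           real m \<le> real (2 * D n + 1) * log (real CARD('a)) (real n / real (2 * D n + 1))
                     + (3 + 2 * log (real CARD('a)) (exp 1 * real CARD('a))) * real (D n)"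
    by (rule eventually_mono) (use exists_approx_matrix_log_rows less_imp_le[OF assms(1)] in blast)
qed

end
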